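(* Let $n\ge 1$ and let $L\subseteq\Sigma^*$ be a finite or cofinite regular language with state complexity $n$. Then the syntactic complexity of $L$ satisfies $\sigma(L)\le (n-1)!$. Moreover, this bound is tight: for every $n\ge 1$ there exist an alphabet $\Sigma$ and a finite language $L\subseteq\Sigma^*$ with state complexity $n$ and $\sigma(L)=(n-1)!$.
   Context: A language $L\subseteq\Sigma^*$ over a finite non-empty alphabet $\Sigma$ is cofinite if its complement $\Sigma^*\setminus L$ is finite. The state complexity of a regular language $L$ is the number of states of its minimal deterministic finite automaton (DFA). The syntactic (Myhill) congruence of $L$ is defined on $\Sigma^*$ by $x\approx_L y$ iff for all $u,v\in\Sigma^*$, $uxv\in L \Leftrightarrow uyv\in L$. The syntactic semigroup of $L$ is $\Sigma^+/\approx_L$. The syntactic complexity $\sigma(L)$ is the cardinality of the syntactic semigroup of $L$; equivalently, it is the number of distinct transformations of the state set of the minimal DFA of $L$ induced by non-empty words. *)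

theory Defs
  imports Main
begin

definition left_quotient :: "'a set \<Rightarrow> 'a list set \<Rightarrow> 'a list \<Rightarrow> 'a list set" where
  "left_quotient A L w = {v \<in> lists A. w @ v \<in> L}"

text \<open>State complexity: number of states of the minimal complete DFA of L,
  i.e. the number of distinct left left_quotients (Myhill--Nerode classes).\<close>
definition state_complexity :: "'a set \<Rightarrow> 'a list set \<Rightarrow> nat" where
  "state_complexity A L = card (left_quotient A L ` lists A)"

definition regular_lang :: "'a set \<Rightarrow> 'a list set \<Rightarrow> bool" where
  "regular_lang A L \<longleftrightarrow> L \<subseteq> lists A \<and> finite (left_quotient A L ` lists A)"

definition syntactic_cong :: "'a set \<Rightarrow> 'a list set \<Rightarrow> ('a list \<times> 'a list) set" where
  "syntactic_cong A L = {(x, y). x \<in> lists A \<and> y \<in> lists A \<and>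
     (\<forall>u \<in> lists A. \<forall>v \<in> lists A. (u @ x @ v \<in> L \<longleftrightarrow> u @ y @ v \<in> L))}"

text \<open>Syntactic complexity: cardinality of the syntactic semigroup A^+ / ~_L.\<close>
definition syntactic_complexity :: "'a set \<Rightarrow> 'a list set \<Rightarrow> nat" where
  "syntactic_complexity A L = card ((lists A - {[]}) // syntactic_cong A L)"

definition cofinite_lang :: "'a set \<Rightarrow> 'a list set \<Rightarrow> bool" where
  "cofinite_lang A L \<longleftrightarrow> finite (lists A - L)"

end

theory Submission
  imports Defs "HOL-Library.FuncSet" "HOL-Library.Sublist"
begin

text \<open>For a finite language, a nonempty word maps the empty left quotient to itself and
  strictly lowers the length of the longest word in every other quotient. The transformation
  it induces on the n quotients therefore strictly decreases a height outside a fixed sink,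
  there are at most (n-1)! such maps, and the transformation determines the syntactic class.
  Complementation preserves both the quotients (up to a bijection) and the syntactic
  congruence, which settles the cofinite case. For tightness, take states 0..n-1 with sink
  n-1 and one letter for each map sending every q < n-1 strictly above q: the letter
  q \<mapsto> q+1 makes all states reachable and pairwise distinguishable, so distinct letters
  lie in distinct syntactic classes.\<close>

text \<open>Removing an element of maximal height, whose factor is at most card Q - 1 (the other
  elements), drives the induction.\<close>

lemma prod_card_less_le_fact:
  fixes h :: "'b \<Rightarrow> nat"
  assumes "finite Q" "z \<in> Q"
  shows "(\<Prod>K\<in>Q - {z}. card {K'\<in>Q. h K' < h K}) \<le> fact (card Q - 1)"
  using assms
proof (induction "card Q" arbitrary: Q)
  case 0
  then show ?case by simp
next
  case (Suc m)
  show ?case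
  proof (cases "Q - {z} = {}")
    case True
    then show ?thesis unfolding True by simp
  next
    case False
    have fin: "finite (Q - {z})" using Suc.prems by simp
    obtain top where top: "top \<in> Q - {z}" "h top = Max (h ` (Q - {z}))"
      using False fin by (metis (no_types, lifting) Max_in finite_imageI image_iff image_is_empty)
    have below_top: "h K \<le> h top" if "K \<in> Q - {z}" for K
      using top fin that by simp
    define Q' where "Q' = Q - {top}"
    have card_Q': "card Q' = m"
      using Suc top by (simp add: Q'_def)
    have "card {z, top} \<le> card Q"
      using Suc.prems top by (intro card_mono) auto
    then have "m \<ge> 1" using top Suc.hyps(2) by (auto simp: card_insert_if)
    have same_count: "card {K'\<in>Q. h K' < h K} = card {K'\<in>Q'. h K' < h K}" if "K \<in> Q' - {z}" for K
    proof -
      have "{K'\<in>Q. h K' < h K} = {K'\<in>Q'. h K' < h K}"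
        using below_top[of K] that by (auto simp: Q'_def)
      then show ?thesis by simp
    qed
    have "Q - {z} = insert top (Q' - {z})" using top by (auto simp: Q'_def)
    then have "(\<Prod>K\<in>Q - {z}. card {K'\<in>Q. h K' < h K}) =
        card {K'\<in>Q. h K' < h top} * (\<Prod>K\<in>Q' - {z}. card {K'\<in>Q'. h K' < h K})"
      using fin same_count by (simp add: Q'_def)
    also have "\<dots> \<le> m * fact (m - 1)"
    proof (rule mult_mono)
      have "{K'\<in>Q. h K' < h top} \<subseteq> Q'" by (auto simp: Q'_def)
      then show "card {K'\<in>Q. h K' < h top} \<le> m"
        using card_Q' Suc.prems by (metis card_mono finite_Diff Q'_def)
      show "(\<Prod>K\<in>Q' - {z}. card {K'\<in>Q'. h K' < h K}) \<le> fact (m - 1)"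
        using Suc.hyps(1)[of Q'] Suc.prems top card_Q' by (auto simp: Q'_def)
    qed simp_all
    also have "\<dots> = fact m" using \<open>m \<ge> 1\<close> fact_reduce[of m, where 'a = nat] by simp
    finally show ?thesis using Suc.hyps(2)[symmetric] by simp
  qed
qed

lemma card_decreasing_maps_le_fact:
  fixes h :: "'b \<Rightarrow> nat"
  assumes "finite Q" "z \<in> Q"
  shows "card {f \<in> Q \<rightarrow>\<^sub>E Q. f z = z \<and> (\<forall>K\<in>Q - {z}. h (f K) < h K)} \<le> fact (card Q - 1)"
proof -
  define S where "S K = (if K = z then {z} else {K'\<in>Q. h K' < h K})" for K
  have "{f \<in> Q \<rightarrow>\<^sub>E Q. f z = z \<and> (\<forall>K\<in>Q - {z}. h (f K) < h K)} = (\<Pi>\<^sub>E K\<in>Q. S K)"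
  proof (intro set_eqI iffI)
    fix f assume f: "f \<in> (\<Pi>\<^sub>E K\<in>Q. S K)"
    have "f z = z" using PiE_mem[OF f assms(2)] by (simp add: S_def)
    moreover have "f K \<in> Q \<and> h (f K) < h K" if "K \<in> Q - {z}" for K
      using PiE_mem[OF f, of K] that by (simp add: S_def)
    ultimately show "f \<in> {f \<in> Q \<rightarrow>\<^sub>E Q. f z = z \<and> (\<forall>K\<in>Q - {z}. h (f K) < h K)}"
      using f assms(2) by (auto simp: PiE_iff) (metis insert_Diff insert_iff)
  qed (auto simp: S_def PiE_iff)
  moreover have "card (\<Pi>\<^sub>E K\<in>Q. S K) = card (S z) * (\<Prod>K\<in>Q - {z}. card (S K))"
    using assms by (simp add: card_PiE prod.remove)
  moreover have "(\<Prod>K\<in>Q - {z}. card (S K)) = (\<Prod>K\<in>Q - {z}. card {K'\<in>Q. h K' < h K})"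
    by (rule prod.cong) (simp_all add: S_def)
  ultimately show ?thesis using prod_card_less_le_fact[OF assms] by (simp add: S_def)
qed

lemma quotient_eq_image_of_invariant:
  assumes "sym R" "trans R"
    and invariant: "\<And>x y. x \<in> X \<Longrightarrow> y \<in> X \<Longrightarrow> f x = f y \<Longrightarrow> (x, y) \<in> R"
  shows "X // R = (\<lambda>t. R `` {inv_into X f t}) ` f ` X"
proof -
  have "R `` {inv_into X f (f x)} = R `` {x}" if "x \<in> X" for x
  proof -
    have "(inv_into X f (f x), x) \<in> R"
      using that by (intro invariant) (auto intro: inv_into_into f_inv_into_f)
    then show ?thesis using assms(1,2) by (auto dest: symD elim: transE)
  qed
  then show ?thesis by (auto simp: quotient_def image_image)
qed

definition residual :: "'a list \<Rightarrow> 'a list set \<Rightarrow> 'a list set" where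
  "residual x K = {v. x @ v \<in> K}"

definition word_height :: "'a list set \<Rightarrow> nat" where
  "word_height K = (if K = {} then 0 else Suc (Max (length ` K)))"

lemma left_quotient_append:
  assumes "x \<in> lists A"
  shows "left_quotient A L (u @ x) = residual x (left_quotient A L u)"
  using assms by (auto simp: left_quotient_def residual_def)

lemma residual_subset_drop: "residual x K \<subseteq> drop (length x) ` K"
  by (auto simp: residual_def image_iff) (metis append_eq_conv_conj)

lemma finite_residual: "finite K \<Longrightarrow> finite (residual x K)"
  using residual_subset_drop finite_subset by blast

lemma word_height_residual_less:
  assumes "finite K" "K \<noteq> {}" "x \<noteq> []"
  shows "word_height (residual x K) < word_height K"
proof (cases "residual x K = {}")
  case True
  then show ?thesis using assms by (simp add: word_height_def)
next
  case False
  have fin: "finite (residual x K)" using assms finite_residual by blast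
  obtain v where v: "v \<in> residual x K" "length v = Max (length ` residual x K)"
    using False fin by (metis (no_types, lifting) Max_in finite_imageI image_iff image_is_empty)
  have "length (x @ v) \<le> Max (length ` K)"
    using v assms by (intro Max_ge) (auto simp: residual_def simp del: length_append)
  moreover have "0 < length x" using assms by simp
  ultimately have "Max (length ` residual x K) < Max (length ` K)"
    using v(2) unfolding length_append by linarith
  then show ?thesis using False assms by (simp add: word_height_def)
qed

lemma left_quotient_subset_suffixes: "left_quotient A L w \<subseteq> (\<Union>u\<in>L. set (suffixes u))"
proof -
  have "left_quotient A L w \<subseteq> residual w L" by (auto simp: left_quotient_def residual_def)
  also have "\<dots> \<subseteq> drop (length w) ` L" by (rule residual_subset_drop)
  also have "\<dots> \<subseteq> (\<Union>u\<in>L. set (suffixes u))" by (auto simp: suffix_drop)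
  finally show ?thesis .
qed

lemma finite_left_quotient: "finite L \<Longrightarrow> finite (left_quotient A L w)"
  using left_quotient_subset_suffixes by (metis finite_UN_I finite_set finite_subset)

lemma finite_left_quotients:
  assumes "finite L"
  shows "finite (left_quotient A L ` lists A)"
proof -
  have "left_quotient A L ` lists A \<subseteq> Pow (\<Union>u\<in>L. set (suffixes u))"
    using left_quotient_subset_suffixes by blast
  then show ?thesis using assms by (meson finite_Pow_iff finite_UN_I finite_set finite_subset)
qed

lemma empty_in_left_quotients:
  assumes "finite L" "a \<in> A"
  shows "{} \<in> left_quotient A L ` lists A"
proof -
  define w where "w = replicate (Suc (Max (length ` L))) a"
  have "length (w @ v) \<le> Max (length ` L)" if "w @ v \<in> L" for v
    using assms that by (intro Max_ge) (auto simp del: length_append)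
  then have "left_quotient A L w = {}" by (auto simp: left_quotient_def w_def)
  moreover have "w \<in> lists A" using assms by (simp add: w_def in_lists_conv_set)
  ultimately show ?thesis by (metis image_eqI)
qed

lemma sym_syntactic_cong: "sym (syntactic_cong A L)"
  by (auto simp: sym_def syntactic_cong_def)

lemma trans_syntactic_cong: "trans (syntactic_cong A L)"
  by (auto simp: trans_def syntactic_cong_def)

lemma syntactic_cong_if_same_residuals:
  assumes "x \<in> lists A" "y \<in> lists A"
    and same: "\<And>K. K \<in> left_quotient A L ` lists A \<Longrightarrow> residual x K = residual y K"
  shows "(x, y) \<in> syntactic_cong A L"
proof -
  have "u @ x @ v \<in> L \<longleftrightarrow> u @ y @ v \<in> L" if "u \<in> lists A" "v \<in> lists A" for u v
  proof -
    have "left_quotient A L (u @ x) = left_quotient A L (u @ y)"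
      using same[of "left_quotient A L u"] that assms(1,2) by (simp add: left_quotient_append)
    then show ?thesis
      using that by (auto simp: left_quotient_def set_eq_iff)
  qed
  then show ?thesis using assms(1,2) by (simp add: syntactic_cong_def)
qed

theorem syntactic_complexity_finite_language:
  fixes L :: "'a list set"
  assumes "finite L" "A \<noteq> {}"
  shows "finite ((lists A - {[]}) // syntactic_cong A L)"
    and "syntactic_complexity A L \<le> fact (state_complexity A L - 1)"
proof -
  define Q where "Q = left_quotient A L ` lists A"
  define act where "act x = (\<lambda>K\<in>Q. residual x K)" for x :: "'a list"
  define D where "D = {f \<in> Q \<rightarrow>\<^sub>E Q. f {} = {} \<and>
    (\<forall>K\<in>Q - {{}}. word_height (f K) < word_height K)}"
  define X where "X = lists A - {[]}"
  have "finite Q" using assms(1) by (simp add: Q_def finite_left_quotients)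
  have "{} \<in> Q" using assms empty_in_left_quotients by (fastforce simp: Q_def)
  have act_D: "act ` X \<subseteq> D"
  proof
    fix t assume "t \<in> act ` X"
    then obtain x where x: "x \<in> lists A" "x \<noteq> []" "t = act x" by (auto simp: X_def)
    have "residual x K \<in> Q \<and> (K \<noteq> {} \<longrightarrow> word_height (residual x K) < word_height K)"
      if "K \<in> Q" for K
    proof -
      obtain u where u: "u \<in> lists A" "K = left_quotient A L u" using \<open>K \<in> Q\<close> by (auto simp: Q_def)
      then have "residual x K \<in> Q"
        using x(1) by (metis Q_def append_in_lists_conv image_eqI left_quotient_append)
      moreover have "finite K" using u assms(1) finite_left_quotient by blast
      ultimately show ?thesis using word_height_residual_less x(2) by blast
    qed
    then show "t \<in> D" by (auto simp: D_def x(3) act_def residual_def \<open>{} \<in> Q\<close>)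
  qed
  have "finite D" by (rule finite_subset[of _ "Q \<rightarrow>\<^sub>E Q"]) (auto simp: D_def \<open>finite Q\<close> finite_PiE)
  have "X // syntactic_cong A L = (\<lambda>t. syntactic_cong A L `` {inv_into X act t}) ` act ` X"
  proof (rule quotient_eq_image_of_invariant[OF sym_syntactic_cong trans_syntactic_cong])
    fix x y assume "x \<in> X" "y \<in> X" "act x = act y"
    have "residual x K = residual y K" if "K \<in> Q" for K
      using \<open>act x = act y\<close> that by (metis act_def restrict_apply')
    then show "(x, y) \<in> syntactic_cong A L"
      using \<open>x \<in> X\<close> \<open>y \<in> X\<close> by (intro syntactic_cong_if_same_residuals) (auto simp: X_def Q_def)
  qed
  moreover have "finite (act ` X)" using act_D \<open>finite D\<close> finite_subset by blast
  ultimately show "finite ((lists A - {[]}) // syntactic_cong A L)" by (simp add: X_def)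
  have "card (X // syntactic_cong A L) \<le> card (act ` X)"
    using \<open>finite (act ` X)\<close> by (simp add: \<open>X // _ = _\<close> card_image_le)
  also have "\<dots> \<le> card D" using act_D \<open>finite D\<close> by (rule card_mono[rotated])
  also have "\<dots> \<le> fact (card Q - 1)"
    unfolding D_def by (rule card_decreasing_maps_le_fact[OF \<open>finite Q\<close> \<open>{} \<in> Q\<close>])
  finally show "syntactic_complexity A L \<le> fact (state_complexity A L - 1)"
    by (simp add: syntactic_complexity_def state_complexity_def X_def Q_def)
qed

lemma syntactic_cong_complement: "syntactic_cong A (lists A - L) = syntactic_cong A L"
  unfolding syntactic_cong_def by auto

lemma left_quotients_complement:
  "left_quotient A (lists A - L) ` lists A = (\<lambda>K. lists A - K) ` left_quotient A L ` lists A"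
proof -
  have "left_quotient A (lists A - L) w = lists A - left_quotient A L w" if "w \<in> lists A" for w
    using that by (auto simp: left_quotient_def)
  then show ?thesis by (auto simp: image_image)
qed

lemma state_complexity_complement: "state_complexity A (lists A - L) = state_complexity A L"
proof -
  have "inj_on (\<lambda>K. lists A - K) (left_quotient A L ` lists A)"
    by (rule inj_onI) (auto simp: left_quotient_def)
  then show ?thesis by (simp add: state_complexity_def left_quotients_complement card_image)
qed

theorem syntactic_complexity_cofinite_language:
  assumes "cofinite_lang A L" "A \<noteq> {}"
  shows "syntactic_complexity A L \<le> fact (state_complexity A L - 1)"
  using syntactic_complexity_finite_language(2)[of "lists A - L" A] assms
  by (simp add: cofinite_lang_def syntactic_complexity_def syntactic_cong_complement
      state_complexity_complement)

definition increasing_maps :: "nat \<Rightarrow> (nat \<Rightarrow> nat) set" where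
  "increasing_maps n = {f \<in> {..<n} \<rightarrow>\<^sub>E {..<n}. f (n - 1) = n - 1 \<and> (\<forall>q < n - 1. q < f q)}"

lemma card_increasing_maps:
  assumes "n \<ge> 1"
  shows "card (increasing_maps n) = fact (n - 1)"
proof -
  obtain m where m: "n = Suc m" using assms by (cases n) auto
  define S where "S q = (if q < m then {q<..<n} else {m})" for q
  have "increasing_maps n = (\<Pi>\<^sub>E q\<in>{..<n}. S q)"
  proof (intro set_eqI iffI)
    fix f assume f: "f \<in> increasing_maps n"
    have "f q \<in> S q" if "q < n" for q
      using f that by (cases "q < m") (auto simp: increasing_maps_def S_def m PiE_iff less_Suc_eq)
    then show "f \<in> (\<Pi>\<^sub>E q\<in>{..<n}. S q)" using f by (auto simp: increasing_maps_def PiE_iff)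
  next
    fix f assume f: "f \<in> (\<Pi>\<^sub>E q\<in>{..<n}. S q)"
    have below_top: "q < f q \<and> f q < n" if "q < m" for q
      using PiE_mem[OF f, of q] that by (simp add: S_def m)
    have "f m = m" using PiE_mem[OF f, of m] by (simp add: S_def m)
    then show "f \<in> increasing_maps n"
      using f below_top by (auto simp: increasing_maps_def PiE_iff m less_Suc_eq) fastforce
  qed
  then have "card (increasing_maps n) = (\<Prod>q<Suc m. card (S q))" by (simp add: card_PiE m)
  also have "\<dots> = (\<Prod>q<m. m - q)" by (simp add: S_def m)
  also have "\<dots> = fact m" by (simp add: fact_prod_rev lessThan_atLeast0)
  finally show ?thesis by (simp add: m)
qed

definition run :: "('a \<Rightarrow> nat \<Rightarrow> nat) \<Rightarrow> nat \<Rightarrow> 'a list \<Rightarrow> nat" where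
  "run \<delta> q w = foldl (\<lambda>q a. \<delta> a q) q w"

lemma run_Nil [simp]: "run \<delta> q [] = q"
  and run_Cons [simp]: "run \<delta> q (a # w) = run \<delta> (\<delta> a q) w"
  and run_append: "run \<delta> q (u @ v) = run \<delta> (run \<delta> q u) v"
  by (simp_all add: run_def)

locale increasing_dfa =
  fixes n :: nat and A :: "'a set" and \<delta> :: "'a \<Rightarrow> nat \<Rightarrow> nat" and c :: 'a
  assumes finite_alphabet: "finite A"
    and states_nonempty: "1 \<le> n"
    and letters_increasing: "a \<in> A \<Longrightarrow> \<delta> a \<in> increasing_maps n"
    and counter_letter: "c \<in> A" "\<delta> c = (\<lambda>q\<in>{..<n}. min (Suc q) (n - 1))"
begin

definition accepted_from :: "nat \<Rightarrow> 'a list set" where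
  "accepted_from q = {v \<in> lists A. run \<delta> q v < n - 1}"

definition lang :: "'a list set" where
  "lang = accepted_from 0"

lemma letter_less: "a \<in> A \<Longrightarrow> q < n \<Longrightarrow> \<delta> a q < n"
  and letter_sink: "a \<in> A \<Longrightarrow> \<delta> a (n - 1) = n - 1"
  and letter_increasing: "a \<in> A \<Longrightarrow> q < n - 1 \<Longrightarrow> q < \<delta> a q"
  using letters_increasing by (auto simp: increasing_maps_def PiE_iff)

lemma run_less: "w \<in> lists A \<Longrightarrow> q < n \<Longrightarrow> run \<delta> q w < n"
  by (induction w arbitrary: q) (auto simp: letter_less)

lemma run_sink: "w \<in> lists A \<Longrightarrow> run \<delta> (n - 1) w = n - 1"
  by (induction w) (auto simp: letter_sink[simplified])

lemma run_sink_or_ge_length: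
  "w \<in> lists A \<Longrightarrow> q < n \<Longrightarrow> run \<delta> q w = n - 1 \<or> q + length w \<le> run \<delta> q w"
proof (induction w arbitrary: q)
  case (Cons a w)
  show ?case
  proof (cases "q < n - 1")
    case True
    then have "q < \<delta> a q" "\<delta> a q < n"
      using Cons.prems letter_increasing letter_less by auto
    then show ?thesis using Cons by fastforce
  next
    case False
    then have "q = n - 1" using Cons.prems(2) by simp
    then show ?thesis using Cons.prems(1) run_sink[of "a # w"] by simp
  qed
qed simp

lemma run_counter: "q < n \<Longrightarrow> run \<delta> q (replicate k c) = min (q + k) (n - 1)"
  by (induction k arbitrary: q) (auto simp: counter_letter(2))

lemma counter_words: "replicate k c \<in> lists A"
  using counter_letter(1) by (simp add: in_lists_conv_set)

lemma finite_lang: "finite lang"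
proof (rule finite_subset)
  show "lang \<subseteq> {w. set w \<subseteq> A \<and> length w \<le> n}"
    using run_sink_or_ge_length[of _ 0] states_nonempty
    by (fastforce simp: lang_def accepted_from_def)
  show "finite {w. set w \<subseteq> A \<and> length w \<le> n}"
    by (rule finite_lists_length_le[OF finite_alphabet])
qed

lemma left_quotient_lang: "w \<in> lists A \<Longrightarrow> left_quotient A lang w = accepted_from (run \<delta> 0 w)"
  by (auto simp: left_quotient_def lang_def accepted_from_def run_append)

lemma inj_on_accepted_from: "inj_on accepted_from {..<n}"
proof -
  have "accepted_from q \<noteq> accepted_from q'" if "q < q'" "q' < n" for q q'
  proof -
    define v where "v = replicate (n - 2 - q) c"
    have "v \<in> accepted_from q" "v \<notin> accepted_from q'"
      using that run_counter[of q] run_counter[of q'] counter_words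
      by (auto simp: accepted_from_def v_def)
    then show ?thesis by blast
  qed
  then show ?thesis by (metis inj_onI lessThan_iff linorder_neqE_nat)
qed

lemma left_quotients_lang: "left_quotient A lang ` lists A = accepted_from ` {..<n}"
proof
  show "left_quotient A lang ` lists A \<subseteq> accepted_from ` {..<n}"
    using run_less[of _ 0] states_nonempty by (auto simp: left_quotient_lang)
  have "accepted_from q = left_quotient A lang (replicate q c)" if "q < n" for q
    using that run_counter[of 0 q] counter_words by (simp add: left_quotient_lang)
  then show "accepted_from ` {..<n} \<subseteq> left_quotient A lang ` lists A"
    using counter_words by blast
qed

lemma state_complexity_lang: "state_complexity A lang = n"
  using inj_on_accepted_from by (simp add: state_complexity_def left_quotients_lang card_image)

lemma same_map_if_syntactic_cong:
  assumes "a \<in> A" "b \<in> A" "([a], [b]) \<in> syntactic_cong A lang"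
  shows "\<delta> a = \<delta> b"
proof
  fix q
  show "\<delta> a q = \<delta> b q"
  proof (cases "q < n")
    case True
    define u where "u = replicate q c"
    have u: "u \<in> lists A" "run \<delta> 0 u = q"
      using counter_words run_counter[of 0 q] True by (simp_all add: u_def)
    have "u @ [a] @ v \<in> lang \<longleftrightarrow> u @ [b] @ v \<in> lang" if "v \<in> lists A" for v
      using assms(3) u(1) that unfolding syntactic_cong_def by blast
    then have "left_quotient A lang (u @ [a]) = left_quotient A lang (u @ [b])"
      by (simp add: left_quotient_def set_eq_iff) blast
    then have "accepted_from (\<delta> a q) = accepted_from (\<delta> b q)"
      using assms(1,2) u by (simp add: left_quotient_lang run_append)
    moreover have "\<delta> a q < n" "\<delta> b q < n"
      using True assms(1,2) letter_less by auto
    ultimately show ?thesis using inj_onD[OF inj_on_accepted_from] by blast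
  next
    case False
    have "\<delta> a \<in> {..<n} \<rightarrow>\<^sub>E {..<n}" "\<delta> b \<in> {..<n} \<rightarrow>\<^sub>E {..<n}"
      using assms(1,2) letters_increasing by (simp_all add: increasing_maps_def)
    then show ?thesis using False PiE_arb[of "\<delta> _" "{..<n}" "\<lambda>_. {..<n}" q] by (metis lessThan_iff)
  qed
qed

lemma card_alphabet_le_syntactic_complexity:
  assumes "inj_on \<delta> A"
  shows "card A \<le> syntactic_complexity A lang"
proof -
  define cls where "cls a = syntactic_cong A lang `` {[a]}" for a
  have "inj_on cls A"
  proof (rule inj_onI)
    fix a b assume ab: "a \<in> A" "b \<in> A" and "cls a = cls b"
    moreover have "([b], [b]) \<in> syntactic_cong A lang" using ab by (simp add: syntactic_cong_def)
    ultimately have "([a], [b]) \<in> syntactic_cong A lang" unfolding cls_def by (metis Image_singleton_iff)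
    then show "a = b" using same_map_if_syntactic_cong ab inj_onD[OF assms] by blast
  qed
  then have "card A = card (cls ` A)" by (simp add: card_image)
  also have "\<dots> \<le> card ((lists A - {[]}) // syntactic_cong A lang)"
  proof (rule card_mono)
    show "finite ((lists A - {[]}) // syntactic_cong A lang)"
      using syntactic_complexity_finite_language(1)[OF finite_lang] counter_letter(1) by blast
    show "cls ` A \<subseteq> (lists A - {[]}) // syntactic_cong A lang"
      by (auto simp: cls_def intro!: quotientI)
  qed
  finally show ?thesis by (simp add: syntactic_complexity_def)
qed

end

lemma exists_finite_language_syntactic_complexity_fact:
  assumes "n \<ge> 1"
  shows "\<exists>(A :: nat set) (L :: nat list set). finite A \<and> A \<noteq> {} \<and> L \<subseteq> lists A \<and> finite L \<and>
    state_complexity A L = n \<and> syntactic_complexity A L = fact (n - 1)"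
proof -
  define A where "A = {0..<card (increasing_maps n)}"
  have card_A: "card A = fact (n - 1)" using assms by (simp add: A_def card_increasing_maps)
  have "finite (increasing_maps n)" using card_increasing_maps[OF assms] card.infinite by fastforce
  then obtain \<delta> where \<delta>: "bij_betw \<delta> A (increasing_maps n)"
    using ex_bij_betw_nat_finite unfolding A_def by blast
  have "(\<lambda>q\<in>{..<n}. min (Suc q) (n - 1)) \<in> increasing_maps n"
    using assms by (auto simp: increasing_maps_def)
  then obtain c where "c \<in> A" "\<delta> c = (\<lambda>q\<in>{..<n}. min (Suc q) (n - 1))"
    using \<delta> by (metis bij_betw_imp_surj_on imageE)
  then interpret increasing_dfa n A \<delta> c
    using assms \<delta> by unfold_locales (auto simp: A_def bij_betw_def)
  have "syntactic_complexity A lang \<le> fact (state_complexity A lang - 1)"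
    using \<open>c \<in> A\<close> by (intro syntactic_complexity_finite_language(2)[OF finite_lang]) blast
  then have "syntactic_complexity A lang = fact (n - 1)"
    using card_alphabet_le_syntactic_complexity[OF bij_betw_imp_inj_on[OF \<delta>]]
    by (simp add: card_A state_complexity_lang)
  moreover have "lang \<subseteq> lists A" by (auto simp: lang_def accepted_from_def)
  ultimately show ?thesis
    using finite_alphabet \<open>c \<in> A\<close> finite_lang state_complexity_lang by blast
qed

theorem theorem1:
  shows "(\<forall>(A :: 'a set) (L :: 'a list set) (n :: nat).
            finite A \<and> A \<noteq> {} \<and> L \<subseteq> lists A \<and> regular_lang A L \<and>
            (finite L \<or> cofinite_lang A L) \<and> n \<ge> 1 \<and> state_complexity A L = n
            \<longrightarrow> syntactic_complexity A L \<le> fact (n - 1))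
       \<and> (\<forall>n :: nat. n \<ge> 1 \<longrightarrow>
            (\<exists>(A :: nat set) (L :: nat list set).
               finite A \<and> A \<noteq> {} \<and> L \<subseteq> lists A \<and> finite L \<and>
               state_complexity A L = n \<and> syntactic_complexity A L = fact (n - 1)))"
  using syntactic_complexity_finite_language(2) syntactic_complexity_cofinite_language
    exists_finite_language_syntactic_complexity_fact
  by blast

end
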